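(* Let $k$ be a difference field of characteristic $0$, $R=k\{y_1,\ldots,y_n\}$, $I$ a radical well-mixed monomial $\sigma$-ideal of $R$, and $\mathbf{a}\in(\mathbb{N}\cup\{-1\})^n$ with $\mathbf{a}\geqslant\mathbf{b}$ for every character vector $\mathbf{b}$ of $I$. Then \[I=\bigcap\{\mathfrak{m}^{\mathbf{a}\backslash\mathbf{b}}:\mathbf{b}\text{ is a character vector of }I^{[\mathbf{a}]}\},\] and \[I^{[\mathbf{a}]}=\langle \mathbf{y}^{x^{\mathbf{a}\backslash\mathbf{b}}}:\mathfrak{m}^{\mathbf{b}}\text{ is an irreducible component of }I\rangle_r.\]
   Context: A difference field is a field $k$ with a ring endomorphism $\sigma$; $R=k\{y_1,\ldots,y_n\}$ is the polynomial ring over $k$ in the variables $\sigma^j(y_i)$, with $\sigma$ extended naturally. For $p=\sum_i c_ix^i\in\mathbb{N}[x]$ and $a\in R$, $a^p=\prod_i(\sigma^i(a))^{c_i}$; $\mathbf{y}^{\mathbf{u}}=y_1^{u_1}\cdots y_n^{u_n}$. A $\sigma$-ideal is an ideal stable under $\sigma$; monomial if generated by monomials; well-mixed if $ab\in I\Rightarrow a\sigma(b)\in I$. $\langle F\rangle_r$ is the smallest radical well-mixed $\sigma$-ideal containing $F$. For $\mathbf{b}\in(\mathbb{N}\cup\{-1\})^n$, $x^{\mathbf{b}}=(x^{b_1},\ldots,x^{b_n})$ with $x^{-1}=0$, and $\mathfrak{m}^{\mathbf{b}}$ is the $\sigma$-ideal generated by $\{y_i^{x^{b_i}}:b_i\ne-1\}$.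 Every radical well-mixed monomial $\sigma$-ideal $I$ has a unique irredundant decomposition $I=\mathfrak{m}^{\mathbf{b}_1}\cap\cdots\cap\mathfrak{m}^{\mathbf{b}_s}$; the $\mathfrak{m}^{\mathbf{b}_i}$ are its irreducible components. Vectors are compared componentwise. The character vectors of $I$ are the finitely many vectors $\mathbf{a}_1,\ldots,\mathbf{a}_m$ forming a minimal set with $I=\langle\mathbf{y}^{x^{\mathbf{a}_1}},\ldots,\mathbf{y}^{x^{\mathbf{a}_m}}\rangle_r$ (equivalently, the componentwise-minimal $\mathbf{a}$ with $\mathbf{y}^{x^{\mathbf{a}}}\in I$). For $\mathbf{b}\leqslant\mathbf{a}$, $\mathbf{a}\backslash\mathbf{b}$ has $i$-th coordinate $a_i+1-b_i$ if $b_i\ge0$ and $-1$ if $b_i=-1$. The Alexander dual is $I^{[\mathbf{a}]}=\bigcap\{\mathfrak{m}^{\mathbf{a}\backslash\mathbf{b}}:\mathbf{b}\text{ a character vector of }I\}$, defined when $\mathbf{a}$ dominates all character vectors of $I$. *)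

theory Defs
  imports Main "HOL-Library.Poly_Mapping"
begin

definition difference_field :: "('k::field \<Rightarrow> 'k) \<Rightarrow> bool" where
  "difference_field \<sigma> \<longleftrightarrow> \<sigma> 1 = 1 \<and> (\<forall>a b. \<sigma> (a + b) = \<sigma> a + \<sigma> b) \<and>
     (\<forall>a b. \<sigma> (a * b) = \<sigma> a * \<sigma> b)"

text \<open>The difference polynomial ring R = k{y_1,...,y_n}: the polynomial ring over k
  in the variables sigma^j(y_i); the variable (i, j) stands for sigma^j(y_i).\<close>
type_synonym ('n, 'k) dpoly = "(('n \<times> nat) \<Rightarrow>\<^sub>0 nat) \<Rightarrow>\<^sub>0 'k"

definition shift_mono :: "(('n \<times> nat) \<Rightarrow>\<^sub>0 nat) \<Rightarrow> (('n \<times> nat) \<Rightarrow>\<^sub>0 nat)" where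
  "shift_mono m = (\<Sum>v\<in>Poly_Mapping.keys m. Poly_Mapping.single (fst v, Suc (snd v)) (Poly_Mapping.lookup m v))"

definition sigmaR :: "('k::field \<Rightarrow> 'k) \<Rightarrow> ('n, 'k) dpoly \<Rightarrow> ('n, 'k) dpoly" where
  "sigmaR \<sigma> p = (\<Sum>m\<in>Poly_Mapping.keys p. Poly_Mapping.single (shift_mono m) (\<sigma> (Poly_Mapping.lookup p m)))"

definition is_ideal :: "'a::comm_ring_1 set \<Rightarrow> bool" where
  "is_ideal I \<longleftrightarrow> 0 \<in> I \<and> (\<forall>a\<in>I. \<forall>b\<in>I. a + b \<in> I) \<and> (\<forall>r. \<forall>a\<in>I. r * a \<in> I)"

definition ideal_gen :: "'a::comm_ring_1 set \<Rightarrow> 'a set" where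
  "ideal_gen S = \<Inter>{J. is_ideal J \<and> S \<subseteq> J}"

definition sigma_ideal :: "('k::field \<Rightarrow> 'k) \<Rightarrow> ('n, 'k) dpoly set \<Rightarrow> bool" where
  "sigma_ideal \<sigma> I \<longleftrightarrow> is_ideal I \<and> (\<forall>a\<in>I. sigmaR \<sigma> a \<in> I)"

definition radical :: "'a::comm_ring_1 set \<Rightarrow> bool" where
  "radical I \<longleftrightarrow> (\<forall>a. \<forall>k::nat. a ^ k \<in> I \<longrightarrow> a \<in> I)"

definition well_mixed :: "('k::field \<Rightarrow> 'k) \<Rightarrow> ('n, 'k) dpoly set \<Rightarrow> bool" where
  "well_mixed \<sigma> I \<longleftrightarrow> (\<forall>a b. a * b \<in> I \<longrightarrow> a * sigmaR \<sigma> b \<in> I)"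

definition monomials :: "('n, 'k::field) dpoly set" where
  "monomials = {Poly_Mapping.single m 1 | m. True}"

definition monomial_ideal :: "('n, 'k::field) dpoly set \<Rightarrow> bool" where
  "monomial_ideal I \<longleftrightarrow> I = ideal_gen (I \<inter> monomials)"

definition sigma_ideal_gen :: "('k::field \<Rightarrow> 'k) \<Rightarrow> ('n, 'k) dpoly set \<Rightarrow> ('n, 'k) dpoly set" where
  "sigma_ideal_gen \<sigma> S = \<Inter>{J. sigma_ideal \<sigma> J \<and> S \<subseteq> J}"

definition rwm_gen :: "('k::field \<Rightarrow> 'k) \<Rightarrow> ('n, 'k) dpoly set \<Rightarrow> ('n, 'k) dpoly set" where
  "rwm_gen \<sigma> F = \<Inter>{J. sigma_ideal \<sigma> J \<and> radical J \<and> well_mixed \<sigma> J \<and> F \<subseteq> J}"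

text \<open>Vectors are maps from the (finite) variable index type to int with all entries \<ge> -1;
  an entry -1 encodes x^(-1) = 0. Comparison is componentwise (the pointwise order).\<close>
definition valid_vec :: "('n \<Rightarrow> int) \<Rightarrow> bool" where
  "valid_vec v \<longleftrightarrow> (\<forall>i. v i \<ge> -1)"

definition dvar :: "'n \<Rightarrow> nat \<Rightarrow> ('n, 'k::field) dpoly" where
  "dvar i j = Poly_Mapping.single (Poly_Mapping.single (i, j) 1) 1"

definition ymono :: "('n::finite \<Rightarrow> int) \<Rightarrow> ('n, 'k::field) dpoly" where
  "ymono a = Poly_Mapping.single (\<Sum>i\<in>{i. a i \<noteq> -1}. Poly_Mapping.single (i, nat (a i)) 1) 1"

definition mideal :: "('k::field \<Rightarrow> 'k) \<Rightarrow> ('n \<Rightarrow> int) \<Rightarrow> ('n, 'k) dpoly set" where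
  "mideal \<sigma> b = sigma_ideal_gen \<sigma> {dvar i (nat (b i)) | i. b i \<noteq> -1}"

definition character_vector :: "('n::finite, 'k::field) dpoly set \<Rightarrow> ('n \<Rightarrow> int) \<Rightarrow> bool" where
  "character_vector I a \<longleftrightarrow> valid_vec a \<and> ymono a \<in> I \<and>
     (\<forall>a'. valid_vec a' \<and> ymono a' \<in> I \<and> a' \<le> a \<longrightarrow> a' = a)"

text \<open>Irreducible components: members of an irredundant decomposition
  I = m^(b_1) \<inter> ... \<inter> m^(b_s) (which is unique by the paper).\<close>
definition irredundant_decomp :: "('k::field \<Rightarrow> 'k) \<Rightarrow> ('n, 'k) dpoly set \<Rightarrow> ('n \<Rightarrow> int) set \<Rightarrow> bool" where
  "irredundant_decomp \<sigma> I S \<longleftrightarrow> finite S \<and> (\<forall>b\<in>S. valid_vec b) \<and>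
     I = \<Inter>(mideal \<sigma> ` S) \<and> (\<forall>b\<in>S. \<Inter>(mideal \<sigma> ` (S - {b})) \<noteq> I)"

definition irreducible_component :: "('k::field \<Rightarrow> 'k) \<Rightarrow> ('n, 'k) dpoly set \<Rightarrow> ('n \<Rightarrow> int) \<Rightarrow> bool" where
  "irreducible_component \<sigma> I b \<longleftrightarrow> (\<exists>S. irredundant_decomp \<sigma> I S \<and> b \<in> S)"

definition vdiff :: "('n \<Rightarrow> int) \<Rightarrow> ('n \<Rightarrow> int) \<Rightarrow> ('n \<Rightarrow> int)" where
  "vdiff a b = (\<lambda>i. if b i = -1 then -1 else a i + 1 - b i)"

definition alexander_dual :: "('k::field \<Rightarrow> 'k) \<Rightarrow> ('n::finite, 'k) dpoly set \<Rightarrow> ('n \<Rightarrow> int) \<Rightarrow> ('n, 'k) dpoly set" where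
  "alexander_dual \<sigma> I a = \<Inter>{mideal \<sigma> (vdiff a b) | b. character_vector I b}"

end

theory Submission
  imports Defs "HOL-Library.Countable" "HOL-Library.FuncSet"
begin

text \<open>
  Everything is reduced to exponent vectors. A radical well-mixed monomial \<sigma>-ideal is
  determined by the upward closed set V of valid vectors v with y^(x^v) in it, and m^w
  corresponds to the set of vectors that reach w in some coordinate. Under this translation the
  Alexander dual I^[a] corresponds to the set Q of vectors reaching a\b for every minimal b of V,
  and a direct computation shows that V is the intersection of the sets belonging to a\c, c minimal
  in Q, and that these sets form an antichain. Each set belonging to some m^w is irreducible:
  if it contains a finite intersection of such sets, it contains one of them. Hence this
  decomposition is the unique irredundant one, i.e. the irreducible components of I are the
  m^(a\c). This gives the first identity; the second holds because every radical well-mixed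
  monomial \<sigma>-ideal is generated by the y^(x^c) with c minimal, and the minimal vectors of
  I^[a] are the c above.
\<close>

abbreviation "lookup \<equiv> Poly_Mapping.lookup"
abbreviation "keys \<equiv> Poly_Mapping.keys"
abbreviation "single \<equiv> Poly_Mapping.single"

section \<open>Polynomials without zero divisors\<close>

lemma ex_max_weight_key:
  fixes h :: "'a \<Rightarrow> 'b::zero" and \<Phi> :: "'a \<Rightarrow> 'c::linorder"
  assumes "finite {a. h a \<noteq> 0}" and "h \<noteq> (\<lambda>a. 0)"
  shows "\<exists>a. h a \<noteq> 0 \<and> (\<forall>x. h x \<noteq> 0 \<longrightarrow> \<Phi> x \<le> \<Phi> a)"
proof -
  have "\<Phi> ` {a. h a \<noteq> 0} \<noteq> {}" using assms(2) by auto
  then have "Max (\<Phi> ` {a. h a \<noteq> 0}) \<in> \<Phi> ` {a. h a \<noteq> 0}" using assms(1) by simp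
  then obtain a where "h a \<noteq> 0" and "\<Phi> a = Max (\<Phi> ` {a. h a \<noteq> 0})" by auto
  moreover have "\<Phi> x \<le> Max (\<Phi> ` {a. h a \<noteq> 0})" if "h x \<noteq> 0" for x
    using assms(1) that by (intro Max_ge) auto
  ultimately show ?thesis by auto
qed

text \<open>The library proves this for linearly ordered exponent monoids; the monomials of a
  difference polynomial ring are not ordered, but embed additively into such a monoid.
  The product of the terms of largest weight is the only contribution to its monomial.\<close>

lemma mult_neq_zero_if_additive_embedding:
  fixes f g :: "'a::comm_monoid_add \<Rightarrow>\<^sub>0 'b::semiring_no_zero_divisors"
    and \<Phi> :: "'a \<Rightarrow> 'c::{ordered_cancel_comm_monoid_add, linorder}"
  assumes inj: "inj \<Phi>" and add: "\<And>x y. \<Phi> (x + y) = \<Phi> x + \<Phi> y"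
    and "f \<noteq> 0" and "g \<noteq> 0"
  shows "f * g \<noteq> 0"
  using assms(3,4)
proof transfer
  fix f g :: "'a \<Rightarrow> 'b"
  assume fin_f: "finite {a. f a \<noteq> 0}" and fin_g: "finite {a. g a \<noteq> 0}"
    and "f \<noteq> (\<lambda>a. 0)" and "g \<noteq> (\<lambda>a. 0)"
  then obtain a b where a: "f a \<noteq> 0" "\<And>x. f x \<noteq> 0 \<Longrightarrow> \<Phi> x \<le> \<Phi> a"
    and b: "g b \<noteq> 0" "\<And>y. g y \<noteq> 0 \<Longrightarrow> \<Phi> y \<le> \<Phi> b"
    using ex_max_weight_key[of f \<Phi>] ex_max_weight_key[of g \<Phi>] by blast
  have unique: "x = a \<and> y = b" if "f x \<noteq> 0" "g y \<noteq> 0" "a + b = x + y" for x y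
  proof -
    have sum_eq: "\<Phi> x + \<Phi> y = \<Phi> a + \<Phi> b" using that(3) add by metis
    have "\<Phi> x \<le> \<Phi> a" "\<Phi> y \<le> \<Phi> b" using that a b by auto
    then have "\<Phi> x = \<Phi> a"
      using add_less_le_mono[of "\<Phi> x" "\<Phi> a" "\<Phi> y" "\<Phi> b"] sum_eq by fastforce
    moreover from this have "\<Phi> y = \<Phi> b" using sum_eq by simp
    ultimately show ?thesis using inj by (auto dest: injD)
  qed
  have "(\<Sum>(x, y). f x * g y when a + b = x + y) = (\<Sum>(x, y). f x * g y when (a, b) = (x, y))"
    by (rule Sum_any.cong) (use unique in \<open>fastforce simp: when_def\<close>)
  also have "\<dots> = (\<Sum>xy. (case xy of (x, y) \<Rightarrow> f x * g y) when (a, b) = xy)"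
    unfolding split_def when_def by auto
  also have "\<dots> = f a * g b"
    by simp
  also have "\<dots> \<noteq> 0" using a b by simp
  finally have "prod_fun f g (a + b) \<noteq> 0"
    using fin_f fin_g by (simp add: prod_fun_unfold_prod)
  then show "prod_fun f g \<noteq> (\<lambda>k. 0)" by (auto simp: fun_eq_iff)
qed

definition nat_exps :: "('v::countable \<Rightarrow>\<^sub>0 nat) \<Rightarrow> (nat \<Rightarrow>\<^sub>0 nat)" where
  "nat_exps m = Abs_poly_mapping
     (\<lambda>n. if n \<in> range (to_nat :: 'v \<Rightarrow> nat) then lookup m (from_nat n) else 0)"

lemma lookup_nat_exps:
  fixes m :: "'v::countable \<Rightarrow>\<^sub>0 nat"
  shows "lookup (nat_exps m) n = (if n \<in> range (to_nat :: 'v \<Rightarrow> nat) then lookup m (from_nat n) else 0)"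
proof -
  let ?f = "\<lambda>n. if n \<in> range (to_nat :: 'v \<Rightarrow> nat) then lookup m (from_nat n) else 0"
  have "{n. ?f n \<noteq> 0} \<subseteq> to_nat ` keys m"
    by (auto simp: in_keys_iff)
  then have "finite {n. ?f n \<noteq> 0}"
    by (rule finite_subset) simp
  then show ?thesis
    unfolding nat_exps_def by (simp add: Abs_poly_mapping_inverse)
qed

lemma nat_exps_add: "nat_exps (x + y) = nat_exps x + nat_exps y"
  by (rule poly_mapping_eqI) (simp add: lookup_nat_exps lookup_add)

lemma inj_nat_exps: "inj (nat_exps :: ('v::countable \<Rightarrow>\<^sub>0 nat) \<Rightarrow> _)"
proof (rule injI, rule poly_mapping_eqI)
  fix x y :: "'v \<Rightarrow>\<^sub>0 nat" and v :: 'v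
  assume "nat_exps x = nat_exps y"
  then have "lookup (nat_exps x) (to_nat v) = lookup (nat_exps y) (to_nat v)" by simp
  then show "lookup x v = lookup y v" by (simp add: lookup_nat_exps)
qed

lemma dpoly_mult_neq_zero:
  fixes p q :: "('n::finite, 'k::field) dpoly"
  assumes "p \<noteq> 0" "q \<noteq> 0"
  shows "p * q \<noteq> 0"
  by (rule mult_neq_zero_if_additive_embedding, rule inj_nat_exps, rule nat_exps_add, fact+)

lemma poly_mapping_sum_single: "p = (\<Sum>m\<in>keys p. single m (lookup p m))"
proof (rule poly_mapping_eqI)
  fix k
  have "lookup (\<Sum>m\<in>keys p. single m (lookup p m)) k = (\<Sum>m\<in>keys p. lookup p m when m = k)"
    by (simp add: lookup_sum lookup_single)
  also have "\<dots> = lookup p k"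
    by (cases "k \<in> keys p") (simp_all add: when_def in_keys_iff)
  finally show "lookup p k = lookup (\<Sum>m\<in>keys p. single m (lookup p m)) k" by simp
qed

lemma is_ideal_zero: "is_ideal J \<Longrightarrow> 0 \<in> J"
  and is_ideal_add: "is_ideal J \<Longrightarrow> a \<in> J \<Longrightarrow> b \<in> J \<Longrightarrow> a + b \<in> J"
  and is_ideal_mult_left: "is_ideal J \<Longrightarrow> a \<in> J \<Longrightarrow> r * a \<in> J"
  by (simp_all add: is_ideal_def)

lemma is_ideal_mult_right: "is_ideal J \<Longrightarrow> a \<in> J \<Longrightarrow> a * r \<in> J"
  by (metis is_ideal_mult_left mult.commute)

lemma is_ideal_diff: "is_ideal J \<Longrightarrow> a \<in> J \<Longrightarrow> b \<in> J \<Longrightarrow> a - b \<in> J"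
  using is_ideal_add[of J a "(-1) * b"] is_ideal_mult_left[of J b "-1"] by simp

lemma is_ideal_sum: "is_ideal J \<Longrightarrow> (\<And>x. x \<in> A \<Longrightarrow> f x \<in> J) \<Longrightarrow> sum f A \<in> J"
  by (induction A rule: infinite_finite_induct) (auto simp: is_ideal_zero is_ideal_add)

lemma single_one_mult_mem:
  assumes "is_ideal J" "single m 1 \<in> J"
  shows "single (x + m) (1 :: 'b::comm_ring_1) \<in> J"
proof -
  have "single (x + m) (1 :: 'b) = single x 1 * single m 1" by (simp add: mult_single)
  then show ?thesis using assms is_ideal_mult_left by metis
qed

lemma mem_ideal_if_monomials_mem:
  assumes "is_ideal J" "\<And>m. m \<in> keys p \<Longrightarrow> single m 1 \<in> J"
  shows "p \<in> J"
proof -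
  have "single m (lookup p m) = single 0 (lookup p m) * single m 1" for m
    by (simp add: mult_single)
  then have "(\<Sum>m\<in>keys p. single m (lookup p m)) \<in> J"
    using assms by (metis is_ideal_sum is_ideal_mult_left)
  then show ?thesis using poly_mapping_sum_single by metis
qed

lemma is_ideal_monomial_span:
  assumes "\<And>m x. m \<in> S \<Longrightarrow> x + m \<in> S"
  shows "is_ideal {p :: 'a::comm_monoid_add \<Rightarrow>\<^sub>0 'b::comm_ring_1. keys p \<subseteq> S}"
proof -
  have "keys (a + b) \<subseteq> S" if "keys a \<subseteq> S" "keys b \<subseteq> S" for a b :: "'a \<Rightarrow>\<^sub>0 'b"
    using keys_add[of a b] that by blast
  moreover have "keys (r * a) \<subseteq> S" if "keys a \<subseteq> S" for r a :: "'a \<Rightarrow>\<^sub>0 'b"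
    using keys_mult[of r a] that assms by blast
  ultimately show ?thesis unfolding is_ideal_def by simp
qed

lemma monomial_ideal_iff_keys:
  fixes I :: "('n, 'k::field) dpoly set"
  assumes "is_ideal I" "monomial_ideal I"
  shows "p \<in> I \<longleftrightarrow> (\<forall>m\<in>keys p. single m 1 \<in> I)"
proof
  let ?X = "{q :: ('n, 'k) dpoly. keys q \<subseteq> {m. single m 1 \<in> I}}"
  have "is_ideal ?X"
    by (rule is_ideal_monomial_span) (simp add: single_one_mult_mem[OF assms(1)])
  moreover have "I \<inter> monomials \<subseteq> ?X"
    by (auto simp: monomials_def)
  ultimately have "ideal_gen (I \<inter> monomials) \<subseteq> ?X"
    unfolding ideal_gen_def by blast
  moreover assume "p \<in> I"
  ultimately show "\<forall>m\<in>keys p. single m 1 \<in> I"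
    using assms(2) unfolding monomial_ideal_def by blast
qed (use mem_ideal_if_monomials_mem assms(1) in blast)

lemma lookup_shift_mono:
  "lookup (shift_mono m) (i, j) = (if j = 0 then 0 else lookup m (i, j - 1))"
proof -
  have "lookup (shift_mono m) (i, j) = (\<Sum>v\<in>keys m. lookup m v when (fst v, Suc (snd v)) = (i, j))"
    unfolding shift_mono_def by (simp add: lookup_sum lookup_single)
  also have "\<dots> = (\<Sum>v\<in>keys m. lookup m v when j \<noteq> 0 \<and> v = (i, j - 1))"
    by (intro sum.cong refl) (auto simp: when_def)
  also have "\<dots> = (if j = 0 then 0 else lookup m (i, j - 1))"
    by (cases "(i, j - 1) \<in> keys m") (auto simp: when_def in_keys_iff)
  finally show ?thesis .
qed

lemma shift_mono_single: "shift_mono (single (i, j) 1) = single (i, Suc j) 1"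
proof (rule poly_mapping_eqI)
  fix v :: "'a \<times> nat"
  show "lookup (shift_mono (single (i, j) 1)) v = lookup (single (i, Suc j) 1) v"
    by (cases v; cases "snd v") (auto simp: lookup_shift_mono lookup_single when_def)
qed

lemma keys_sigmaR: "keys (sigmaR \<sigma> p) \<subseteq> shift_mono ` keys p"
proof
  fix k assume "k \<in> keys (sigmaR \<sigma> p)"
  then have "(\<Sum>m\<in>keys p. \<sigma> (lookup p m) when shift_mono m = k) \<noteq> 0"
    by (simp add: sigmaR_def in_keys_iff lookup_sum lookup_single)
  then obtain m where "m \<in> keys p" "(\<sigma> (lookup p m) when shift_mono m = k) \<noteq> 0"
    by (rule sum.not_neutral_contains_not_neutral)
  then show "k \<in> shift_mono ` keys p" by (cases "shift_mono m = k") auto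
qed

lemma sigmaR_dvar:
  assumes "difference_field \<sigma>"
  shows "sigmaR \<sigma> (dvar i j) = dvar i (Suc j)"
proof -
  have "sigmaR \<sigma> (single m 1) = single (shift_mono m) 1" for m :: "('n \<times> nat) \<Rightarrow>\<^sub>0 nat"
    using assms by (simp add: sigmaR_def difference_field_def)
  from this[of "single (i, j) 1"] show ?thesis
    unfolding dvar_def shift_mono_single .
qed

definition sqfree :: "'v set \<Rightarrow> ('v \<Rightarrow>\<^sub>0 nat)" where
  "sqfree A = (\<Sum>v\<in>A. single v 1)"

lemma lookup_sqfree: "finite A \<Longrightarrow> lookup (sqfree A) v = (if v \<in> A then 1 else 0)"
  unfolding sqfree_def by (simp add: lookup_sum lookup_single when_def)

lemma keys_sqfree: "finite A \<Longrightarrow> keys (sqfree A) = A"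
  by (auto simp: in_keys_iff lookup_sqfree split: if_splits)

lemma keys_add_nat: "keys (x + y) = keys x \<union> keys (y :: 'v \<Rightarrow>\<^sub>0 nat)"
  by (auto simp: in_keys_iff lookup_add)

lemma sqfree_insert: "finite A \<Longrightarrow> v \<notin> A \<Longrightarrow> sqfree (insert v A) = single v 1 + sqfree A"
  by (simp add: sqfree_def)

lemma sqfree_dvd: "finite A \<Longrightarrow> A \<subseteq> keys m \<Longrightarrow> m = (m - sqfree A) + sqfree A"
  by (rule poly_mapping_eqI) (auto simp: lookup_add lookup_minus lookup_sqfree in_keys_iff)

lemma valid_vec_nonneg:
  assumes "valid_vec v" "v i \<noteq> -1"
  shows "0 \<le> v i"
  using assms(2) spec[OF assms(1)[unfolded valid_vec_def], of i] by linarith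

definition vec_vars :: "('n \<Rightarrow> int) \<Rightarrow> ('n \<times> nat) set" where
  "vec_vars v = {(i, nat (v i)) | i. v i \<noteq> -1}"

lemma vec_vars_eq_image: "vec_vars v = (\<lambda>i. (i, nat (v i))) ` {i. v i \<noteq> -1}"
  by (auto simp: vec_vars_def)

lemma finite_vec_vars: "finite (vec_vars (v :: 'n::finite \<Rightarrow> int))"
  by (simp add: vec_vars_eq_image)

lemma ymono_eq_sqfree: "ymono v = single (sqfree (vec_vars v)) 1"
proof -
  have "inj_on (\<lambda>i. (i, nat (v i))) {i. v i \<noteq> -1}" by (rule inj_onI) simp
  then show ?thesis
    by (simp add: ymono_def sqfree_def vec_vars_eq_image sum.reindex)
qed

definition top_vec :: "('n \<times> nat) set \<Rightarrow> 'n \<Rightarrow> int" where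
  "top_vec A i = (if \<exists>j. (i, j) \<in> A then int (Max {j. (i, j) \<in> A}) else -1)"

definition tops :: "('n \<times> nat) set \<Rightarrow> ('n \<times> nat) set" where
  "tops A = {(i, j) \<in> A. \<forall>j'. (i, j') \<in> A \<longrightarrow> j' \<le> j}"

lemma valid_top_vec: "valid_vec (top_vec A)"
  by (simp add: valid_vec_def top_vec_def)

lemma tops_subset: "tops A \<subseteq> A"
  by (auto simp: tops_def)

lemma finite_fiber: "finite A \<Longrightarrow> finite {j. (i, j) \<in> A}"
  by (rule finite_subset[of _ "snd ` A"]) force+

lemma mem_tops_iff: "finite A \<Longrightarrow> (i, j) \<in> tops A \<longleftrightarrow> top_vec A i = int j"
proof
  assume "finite A" and "(i, j) \<in> tops A"
  then show "top_vec A i = int j"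
    unfolding tops_def top_vec_def
    by (auto intro!: Max_eqI finite_fiber)
next
  assume fin: "finite A" and top: "top_vec A i = int j"
  then have ex: "\<exists>j. (i, j) \<in> A" by (auto simp: top_vec_def split: if_splits)
  then have "j = Max {j. (i, j) \<in> A}" using top by (simp add: top_vec_def)
  moreover have "Max {j. (i, j) \<in> A} \<in> {j. (i, j) \<in> A}"
    using ex by (intro Max_in finite_fiber fin) auto
  ultimately show "(i, j) \<in> tops A"
    unfolding tops_def using fin by (auto intro: Max_ge finite_fiber)
qed

lemma tops_above: "finite A \<Longrightarrow> (i, j) \<in> A \<Longrightarrow> \<exists>k\<ge>j. (i, k) \<in> tops A"
  by (intro exI[of _ "Max {j. (i, j) \<in> A}"])
    (auto simp: mem_tops_iff top_vec_def intro: Max_ge finite_fiber)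

lemma vec_vars_top_vec: "finite A \<Longrightarrow> vec_vars (top_vec A) = tops A"
proof -
  assume fin: "finite A"
  have "top_vec A i \<noteq> -1 \<and> j = nat (top_vec A i) \<longleftrightarrow> top_vec A i = int j" for i j
    using valid_vec_nonneg[OF valid_top_vec, of A i] by (auto simp: nat_eq_iff2)
  then show ?thesis
    using mem_tops_iff[OF fin] by (auto simp: vec_vars_def)
qed

lemma ymono_top_vec: "ymono (top_vec (keys m)) = single (sqfree (tops (keys m))) 1"
  by (simp add: ymono_eq_sqfree vec_vars_top_vec)

lemma tops_keys_dvd: "m = (m - sqfree (tops (keys m))) + sqfree (tops (keys m))"
  by (rule sqfree_dvd) (simp_all add: tops_subset finite_subset[OF tops_subset])

text \<open>\<open>hit w m\<close> and \<open>hits w v\<close> say that the monomial m, respectively y^(x^v), lies in m^w.\<close>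

definition hit :: "('n \<Rightarrow> int) \<Rightarrow> (('n \<times> nat) \<Rightarrow>\<^sub>0 nat) \<Rightarrow> bool" where
  "hit w m \<longleftrightarrow> (\<exists>(i, j)\<in>keys m. w i \<noteq> -1 \<and> nat (w i) \<le> j)"

definition hits :: "('n \<Rightarrow> int) \<Rightarrow> ('n \<Rightarrow> int) \<Rightarrow> bool" where
  "hits w v \<longleftrightarrow> (\<exists>i. w i \<noteq> -1 \<and> w i \<le> v i)"

lemma hit_add: "hit w (x + y) \<longleftrightarrow> hit w x \<or> hit w y"
  unfolding hit_def keys_add_nat by blast

lemma hit_shift_mono: "hit w m \<Longrightarrow> hit w (shift_mono m)"
proof -
  assume "hit w m"
  then obtain i j where ij: "(i, j) \<in> keys m" "w i \<noteq> -1" "nat (w i) \<le> j"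
    unfolding hit_def by blast
  then have "(i, Suc j) \<in> keys (shift_mono m)" by (simp add: in_keys_iff lookup_shift_mono)
  then show ?thesis unfolding hit_def using ij by (intro bexI[of _ "(i, Suc j)"]) auto
qed

lemma hit_tops: "hit w (sqfree (tops (keys m))) \<longleftrightarrow> hit w m"
proof -
  have "finite (tops (keys m))" by (rule finite_subset[OF tops_subset]) simp
  then have keys: "keys (sqfree (tops (keys m))) = tops (keys m)" by (rule keys_sqfree)
  have "(\<exists>(i, j)\<in>tops (keys m). w i \<noteq> -1 \<and> nat (w i) \<le> j) \<longleftrightarrow>
        (\<exists>(i, j)\<in>keys m. w i \<noteq> -1 \<and> nat (w i) \<le> j)"
  proof
    assume "\<exists>(i, j)\<in>keys m. w i \<noteq> -1 \<and> nat (w i) \<le> j"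
    then obtain i j where ij: "(i, j) \<in> keys m" "w i \<noteq> -1" "nat (w i) \<le> j" by blast
    then obtain k where "j \<le> k" "(i, k) \<in> tops (keys m)"
      using tops_above[OF finite_keys ij(1)] by blast
    then show "\<exists>(i, j)\<in>tops (keys m). w i \<noteq> -1 \<and> nat (w i) \<le> j"
      using ij by (intro bexI[of _ "(i, k)"]) auto
  qed (use tops_subset[of "keys m"] in blast)
  then show ?thesis unfolding hit_def keys .
qed

lemma hit_vec_vars:
  fixes v w :: "'n::finite \<Rightarrow> int"
  assumes "valid_vec w" "valid_vec v"
  shows "hit w (sqfree (vec_vars v)) \<longleftrightarrow> hits w v"
proof -
  have "hit w (sqfree (vec_vars v)) \<longleftrightarrow> (\<exists>i. v i \<noteq> -1 \<and> w i \<noteq> -1 \<and> nat (w i) \<le> nat (v i))"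
    unfolding hit_def keys_sqfree[OF finite_vec_vars] unfolding vec_vars_def by auto
  moreover have "v i \<noteq> -1 \<and> w i \<noteq> -1 \<and> nat (w i) \<le> nat (v i) \<longleftrightarrow> w i \<noteq> -1 \<and> w i \<le> v i" for i
    using valid_vec_nonneg[OF assms(1), of i] valid_vec_nonneg[OF assms(2), of i] by auto
  ultimately show ?thesis unfolding hits_def by blast
qed

section \<open>The prime ideals m^w\<close>

definition hit_polys :: "('n \<Rightarrow> int) \<Rightarrow> ('n, 'k::field) dpoly set" where
  "hit_polys w = {p. keys p \<subseteq> {m. hit w m}}"

lemma single_mem_hit_polys: "single m 1 \<in> hit_polys w \<longleftrightarrow> hit w m"
  by (simp add: hit_polys_def)

lemma is_ideal_hit_polys: "is_ideal (hit_polys w)"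
  unfolding hit_polys_def by (rule is_ideal_monomial_span) (simp add: hit_add)

lemma sigma_ideal_hit_polys: "sigma_ideal \<sigma> (hit_polys w :: ('n, 'k::field) dpoly set)"
  unfolding sigma_ideal_def
proof (intro conjI ballI is_ideal_hit_polys)
  fix p :: "('n, 'k) dpoly" assume "p \<in> hit_polys w"
  then show "sigmaR \<sigma> p \<in> hit_polys w"
    using keys_sigmaR[of \<sigma> p] hit_shift_mono unfolding hit_polys_def by blast
qed

lemma sigma_ideal_dvar_le:
  assumes "difference_field \<sigma>" "sigma_ideal \<sigma> J" "dvar i j \<in> J" "j \<le> k"
  shows "dvar i k \<in> J"
  using assms(4,3)
proof (induction k rule: dec_induct)
  case (step k)
  then show ?case
    using assms(2) sigmaR_dvar[OF assms(1)] unfolding sigma_ideal_def by metis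
qed

lemma mideal_eq_hit_polys:
  fixes \<sigma> :: "'k::field \<Rightarrow> 'k" and w :: "'n \<Rightarrow> int"
  assumes df: "difference_field \<sigma>"
  shows "mideal \<sigma> w = hit_polys w"
proof
  have "dvar i (nat (w i)) \<in> hit_polys w" if "w i \<noteq> -1" for i
    using that by (simp add: dvar_def single_mem_hit_polys hit_def)
  then have "hit_polys w \<in> {J. sigma_ideal \<sigma> J \<and> {dvar i (nat (w i)) | i. w i \<noteq> -1} \<subseteq> J}"
    using sigma_ideal_hit_polys by blast
  then show "mideal \<sigma> w \<subseteq> hit_polys w"
    unfolding mideal_def sigma_ideal_gen_def by (rule Inter_lower)
next
  show "hit_polys w \<subseteq> mideal \<sigma> w"
    unfolding mideal_def sigma_ideal_gen_def
  proof (intro Inter_greatest subsetI, clarify)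
    fix J :: "('n, 'k) dpoly set" and p :: "('n, 'k) dpoly"
    assume J: "sigma_ideal \<sigma> J" and gens: "{dvar i (nat (w i)) | i. w i \<noteq> -1} \<subseteq> J"
      and p: "p \<in> hit_polys w"
    have idJ: "is_ideal J" using J by (simp add: sigma_ideal_def)
    show "p \<in> J"
    proof (rule mem_ideal_if_monomials_mem[OF idJ])
      fix m assume "m \<in> keys p"
      then have "hit w m" using p by (auto simp: hit_polys_def)
      then obtain i j where ij: "(i, j) \<in> keys m" "w i \<noteq> -1" "nat (w i) \<le> j"
        unfolding hit_def by blast
      then have "dvar i (nat (w i)) \<in> J" using gens by blast
      then have "dvar i j \<in> J" using sigma_ideal_dvar_le[OF df J _ ij(3)] by blast
      then have "single (sqfree {(i, j)}) 1 \<in> J" by (simp add: dvar_def sqfree_def)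
      moreover have "m = (m - sqfree {(i, j)}) + sqfree {(i, j)}"
        by (rule sqfree_dvd) (use ij(1) in auto)
      ultimately show "single m 1 \<in> J"
        using single_one_mult_mem[OF idJ] by metis
    qed
  qed
qed

definition unhit_part :: "('n \<Rightarrow> int) \<Rightarrow> ('n, 'k::field) dpoly \<Rightarrow> ('n, 'k) dpoly" where
  "unhit_part w p = (\<Sum>m\<in>{m\<in>keys p. \<not> hit w m}. single m (lookup p m))"

lemma lookup_unhit_part: "lookup (unhit_part w p) m = (if hit w m then 0 else lookup p m)"
proof -
  have "lookup (unhit_part w p) m = (\<Sum>m'\<in>{m\<in>keys p. \<not> hit w m}. lookup p m' when m' = m)"
    by (simp add: unhit_part_def lookup_sum lookup_single)
  also have "\<dots> = (if hit w m then 0 else lookup p m)"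
    by (cases "m \<in> keys p") (auto simp: when_def in_keys_iff)
  finally show ?thesis .
qed

lemma unhit_part_eq_zero_iff: "unhit_part w p = 0 \<longleftrightarrow> p \<in> hit_polys w"
  by (auto simp: poly_mapping_eq_iff fun_eq_iff lookup_unhit_part hit_polys_def in_keys_iff
      split: if_splits)

lemma diff_unhit_part_mem: "p - unhit_part w p \<in> hit_polys w"
  by (auto simp: hit_polys_def in_keys_iff lookup_minus lookup_unhit_part split: if_splits)

text \<open>\<open>unhit_part w\<close> is the substitution of 0 for the variables \<sigma>^j(y_i) with j \<ge> w_i and
  \<open>hit_polys w\<close> is its kernel; since the target has no zero divisors, the kernel is prime.\<close>

lemma hit_polys_prime:
  fixes a b :: "('n::finite, 'k::field) dpoly"
  assumes "a * b \<in> hit_polys w"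
  shows "a \<in> hit_polys w \<or> b \<in> hit_polys w"
proof (rule ccontr)
  let ?a = "unhit_part w a" and ?b = "unhit_part w b"
  assume "\<not> (a \<in> hit_polys w \<or> b \<in> hit_polys w)"
  then have "?a * ?b \<noteq> 0"
    by (simp add: unhit_part_eq_zero_iff dpoly_mult_neq_zero)
  then obtain m where m: "m \<in> keys (?a * ?b)" by fastforce
  have "?a * ?b = a * b - (a - ?a) * b - ?a * (b - ?b)"
    by (simp add: algebra_simps)
  also have "\<dots> \<in> hit_polys w"
    using assms is_ideal_mult_right[OF is_ideal_hit_polys diff_unhit_part_mem]
      is_ideal_mult_left[OF is_ideal_hit_polys diff_unhit_part_mem]
    by (intro is_ideal_diff[OF is_ideal_hit_polys])
  finally have "hit w m" using m by (auto simp: hit_polys_def)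
  moreover obtain x y where "m = x + y" "x \<in> keys ?a" "y \<in> keys ?b"
    using m keys_mult[of ?a ?b] by blast
  then have "m = x + y" "\<not> hit w x" "\<not> hit w y"
    by (auto simp: in_keys_iff lookup_unhit_part split: if_splits)
  ultimately show False by (simp add: hit_add)
qed

lemma radical_hit_polys: "radical (hit_polys w :: ('n::finite, 'k::field) dpoly set)"
  unfolding radical_def
proof (intro allI impI)
  fix a :: "('n, 'k) dpoly" and k :: nat
  show "a ^ k \<in> hit_polys w \<Longrightarrow> a \<in> hit_polys w"
  proof (induction k)
    case 0
    have "single 0 (1 :: 'k) \<notin> hit_polys w" unfolding single_mem_hit_polys by (simp add: hit_def)
    then show ?case using 0 by simp
  next
    case (Suc k)
    then show ?case using hit_polys_prime[of a "a ^ k"] by auto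
  qed
qed

lemma well_mixed_hit_polys: "well_mixed \<sigma> (hit_polys w :: ('n::finite, 'k::field) dpoly set)"
  unfolding well_mixed_def
  using hit_polys_prime sigma_ideal_hit_polys[of \<sigma> w] is_ideal_hit_polys
  by (metis is_ideal_mult_left is_ideal_mult_right sigma_ideal_def)

section \<open>Monomials in radical well-mixed ideals\<close>

lemma well_mixed_dvar_le:
  assumes df: "difference_field \<sigma>" and wm: "well_mixed \<sigma> J"
    and "x * dvar i j \<in> J" "j \<le> k"
  shows "x * dvar i k \<in> J"
  using assms(4,3)
proof (induction k rule: dec_induct)
  case (step k)
  then show ?case using wm sigmaR_dvar[OF df] unfolding well_mixed_def by metis
qed

lemma radical_well_mixed_drop_lower:
  assumes df: "difference_field \<sigma>" and wm: "well_mixed \<sigma> J" and rad: "radical J"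
    and idJ: "is_ideal J" and J: "x * dvar i j * dvar i k \<in> J" and "j \<le> k"
  shows "x * dvar i k \<in> J"
proof -
  have "(x * dvar i k) * dvar i j \<in> J" using J by (simp add: mult_ac)
  then have "(x * dvar i k) * dvar i k \<in> J" by (rule well_mixed_dvar_le[OF df wm _ \<open>j \<le> k\<close>])
  then have "x * ((x * dvar i k) * dvar i k) \<in> J" by (rule is_ideal_mult_left[OF idJ])
  then have "(x * dvar i k) ^ 2 \<in> J" by (simp add: power2_eq_square mult_ac)
  then show ?thesis using rad unfolding radical_def by blast
qed

lemma single_one_power: "single e (1 :: 'b::comm_semiring_1) ^ n = single (\<Sum>_<n. e) 1"
  by (induction n) (simp_all add: mult_single add.commute)

lemma radical_sqfree_keys:
  fixes J :: "('n, 'k::field) dpoly set"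
  assumes idJ: "is_ideal J" and rad: "radical J" and m: "single m 1 \<in> J"
  shows "single (sqfree (keys m)) 1 \<in> J"
proof -
  define K where "K = (\<Sum>v\<in>keys m. lookup m v)"
  define E where "E = (\<Sum>_<K. sqfree (keys m))"
  have "lookup m v \<le> lookup E v" for v
  proof (cases "v \<in> keys m")
    case True
    then have "lookup m v \<le> K" unfolding K_def by (intro member_le_sum) auto
    then show ?thesis using True by (simp add: E_def lookup_sum lookup_sqfree)
  qed (simp add: in_keys_iff)
  then have "E = (E - m) + m"
    by (intro poly_mapping_eqI) (simp add: lookup_add lookup_minus)
  then have "single E 1 \<in> J" using single_one_mult_mem[OF idJ m] by metis
  then have "single (sqfree (keys m)) (1 :: 'k) ^ K \<in> J" by (simp add: E_def single_one_power)
  then show ?thesis using rad unfolding radical_def by blast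
qed

text \<open>Well-mixedness lets a lower shift of y_i be replaced by a higher one already
  present, and radicality then removes the repeated factor.\<close>

lemma radical_well_mixed_sqfree_remove:
  fixes J :: "('n, 'k::field) dpoly set"
  assumes df: "difference_field \<sigma>" and wm: "well_mixed \<sigma> J" and rad: "radical J"
    and idJ: "is_ideal J" and fin: "finite A" and A: "single (sqfree A) 1 \<in> J"
    and ij: "(i, j) \<in> A" and ik: "(i, k) \<in> A" and "j < k"
  shows "single (sqfree (A - {(i, j)})) 1 \<in> J"
proof -
  define B where "B = A - {(i, j), (i, k)}"
  have fB: "finite B" using fin by (simp add: B_def)
  have notin: "(i, j) \<notin> insert (i, k) B" "(i, k) \<notin> B" using \<open>j < k\<close> by (auto simp: B_def)
  have "A = insert (i, j) (insert (i, k) B)" using ij ik by (auto simp: B_def)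
  then have "sqfree A = sqfree B + single (i, j) 1 + single (i, k) 1"
    using fB notin by (simp add: sqfree_insert add_ac)
  then have "single (sqfree B) 1 * dvar i j * dvar i k \<in> J"
    using A unfolding dvar_def by (simp add: mult_single)
  then have "single (sqfree B) 1 * dvar i k \<in> J"
    by (rule radical_well_mixed_drop_lower[OF df wm rad idJ]) (use \<open>j < k\<close> in simp)
  moreover have "A - {(i, j)} = insert (i, k) B" using ik \<open>j < k\<close> by (auto simp: B_def)
  then have "sqfree (A - {(i, j)}) = sqfree B + single (i, k) 1"
    using fB notin by (simp add: sqfree_insert add_ac)
  ultimately show ?thesis unfolding dvar_def by (simp add: mult_single)
qed

lemma radical_well_mixed_sqfree_tops:
  fixes J :: "('n, 'k::field) dpoly set"
  assumes df: "difference_field \<sigma>" and wm: "well_mixed \<sigma> J" and rad: "radical J"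
    and idJ: "is_ideal J" and fin: "finite A" and A: "single (sqfree A) 1 \<in> J"
  shows "single (sqfree (tops A)) 1 \<in> J"
proof -
  have "single (sqfree (A - C)) 1 \<in> J" if "finite C" "C \<subseteq> A - tops A" for C
    using that
  proof (induction C rule: finite_induct)
    case empty
    then show ?case using A by simp
  next
    case (insert c C)
    obtain i j where c: "c = (i, j)" by (cases c)
    have ij: "(i, j) \<in> A - C" "(i, j) \<notin> tops A" using insert c by auto
    then obtain k where "j \<le> k" and ik: "(i, k) \<in> tops A"
      using tops_above[OF fin, of i j] by blast
    with ij have "j < k" by (cases "j = k") auto
    have "(i, k) \<in> A - C" using ik tops_subset[of A] insert.prems by blast
    moreover have "single (sqfree (A - C)) 1 \<in> J" using insert.IH insert.prems by simp
    ultimately have "single (sqfree (A - C - {(i, j)})) 1 \<in> J"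
      using radical_well_mixed_sqfree_remove[OF df wm rad idJ _ _ ij(1) _ \<open>j < k\<close>] fin by simp
    moreover have "A - insert c C = A - C - {(i, j)}" using c by auto
    ultimately show ?case by simp
  qed
  from this[of "A - tops A"] show ?thesis
    using fin tops_subset[of A] by (simp add: Diff_Diff_Int Int_absorb1)
qed

lemma radical_well_mixed_single_mem_iff:
  fixes J :: "('n::finite, 'k::field) dpoly set"
  assumes df: "difference_field \<sigma>" and wm: "well_mixed \<sigma> J" and rad: "radical J"
    and idJ: "is_ideal J"
  shows "single m 1 \<in> J \<longleftrightarrow> ymono (top_vec (keys m)) \<in> J"
  unfolding ymono_top_vec
proof
  assume "single m 1 \<in> J"
  then show "single (sqfree (tops (keys m))) 1 \<in> J"
    using radical_sqfree_keys[OF idJ rad] radical_well_mixed_sqfree_tops[OF df wm rad idJ]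
    by simp
next
  assume "single (sqfree (tops (keys m))) 1 \<in> J"
  then show "single m 1 \<in> J" using tops_keys_dvd single_one_mult_mem[OF idJ] by metis
qed

lemma ymono_fun_upd:
  fixes c :: "'n::finite \<Rightarrow> int"
  assumes "c i = -1" "0 \<le> t"
  shows "ymono (c(i := t)) = dvar i (nat t) * ymono c"
proof -
  have "vec_vars (c(i := t)) = insert (i, nat t) (vec_vars c)"
    using assms by (auto simp: vec_vars_def)
  moreover have "(i, nat t) \<notin> vec_vars c" using assms(1) by (simp add: vec_vars_def)
  ultimately show ?thesis
    by (simp add: ymono_eq_sqfree sqfree_insert finite_vec_vars dvar_def mult_single)
qed

lemma well_mixed_ymono_fun_upd:
  fixes J :: "('n::finite, 'k::field) dpoly set"
  assumes df: "difference_field \<sigma>" and idJ: "is_ideal J" and wm: "well_mixed \<sigma> J"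
    and c: "valid_vec c" and "c i \<le> t" and J: "ymono c \<in> J"
  shows "ymono (c(i := t)) \<in> J"
proof (cases "t = c i")
  case True
  then show ?thesis using J by simp
next
  case False
  moreover have "-1 \<le> c i" using c by (simp add: valid_vec_def)
  ultimately have t: "0 \<le> t" using \<open>c i \<le> t\<close> by linarith
  show ?thesis
  proof (cases "c i = -1")
    case True
    show ?thesis
      unfolding ymono_fun_upd[of c i t, OF True t] by (rule is_ideal_mult_left[OF idJ J])
  next
    case False
    define c0 where "c0 = c(i := -1)"
    have ci: "0 \<le> c i" using valid_vec_nonneg[OF c False] .
    have "(ymono c :: ('n, 'k) dpoly) = dvar i (nat (c i)) * ymono c0"
      using ymono_fun_upd[of c0 i "c i"] ci by (simp add: c0_def)
    then have "ymono c0 * dvar i (nat (c i)) \<in> J" using J by (simp add: mult.commute)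
    then have "ymono c0 * dvar i (nat t) \<in> J"
      by (rule well_mixed_dvar_le[OF df wm]) (use \<open>c i \<le> t\<close> in simp)
    moreover have "(ymono (c(i := t)) :: ('n, 'k) dpoly) = dvar i (nat t) * ymono c0"
      using ymono_fun_upd[of c0 i t] t by (simp add: c0_def)
    ultimately show ?thesis by (simp add: mult.commute)
  qed
qed

lemma well_mixed_ymono_mono:
  fixes J :: "('n::finite, 'k::field) dpoly set"
  assumes df: "difference_field \<sigma>" and idJ: "is_ideal J" and wm: "well_mixed \<sigma> J"
    and c: "valid_vec c" and c': "valid_vec c'" and "c \<le> c'" and J: "ymono c \<in> J"
  shows "ymono c' \<in> J"
proof -
  have "ymono (\<lambda>i. if i \<in> A then c' i else c i) \<in> J" if "finite A" for A
    using that
  proof (induction A rule: finite_induct)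
    case empty
    then show ?case using J by simp
  next
    case (insert x A)
    let ?d = "\<lambda>i. if i \<in> A then c' i else c i"
    have "valid_vec ?d" using c c' by (simp add: valid_vec_def)
    moreover have "?d x \<le> c' x" using insert(2) \<open>c \<le> c'\<close> by (simp add: le_fun_def)
    ultimately have "ymono (?d(x := c' x)) \<in> J"
      by (rule well_mixed_ymono_fun_upd[OF df idJ wm _ _ insert.IH])
    moreover have "?d(x := c' x) = (\<lambda>i. if i \<in> insert x A then c' i else c i)" by auto
    ultimately show ?case by simp
  qed
  from this[of UNIV] show ?thesis by simp
qed

definition vecs_of :: "('n::finite, 'k::field) dpoly set \<Rightarrow> ('n \<Rightarrow> int) set" where
  "vecs_of K = {v. valid_vec v \<and> ymono v \<in> K}"

definition minimal_vecs :: "('n \<Rightarrow> int) set \<Rightarrow> ('n \<Rightarrow> int) set" where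
  "minimal_vecs V = {b \<in> V. \<forall>b'\<in>V. b' \<le> b \<longrightarrow> b' = b}"

lemma character_vector_iff: "character_vector K b \<longleftrightarrow> b \<in> minimal_vecs (vecs_of K)"
  by (auto simp: character_vector_def minimal_vecs_def vecs_of_def)

lemma finite_valid_le: "finite {v :: 'n::finite \<Rightarrow> int. valid_vec v \<and> v \<le> u}"
proof (rule finite_subset)
  show "{v. valid_vec v \<and> v \<le> u} \<subseteq> PiE UNIV (\<lambda>i. {-1..u i})"
    by (auto simp: valid_vec_def le_fun_def PiE_iff)
qed (simp add: finite_PiE)

lemma exists_minimal_vec_le:
  fixes V :: "('n::finite \<Rightarrow> int) set"
  assumes "V \<subseteq> Collect valid_vec" "v \<in> V"
  shows "\<exists>b\<in>minimal_vecs V. b \<le> v"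
proof -
  let ?A = "{b \<in> V. b \<le> v}"
  have "?A \<subseteq> {b. valid_vec b \<and> b \<le> v}" using assms(1) by blast
  then have fin: "finite ?A" using finite_valid_le by (rule finite_subset)
  have "v \<in> ?A" using assms(2) by simp
  then obtain b where b: "b \<in> V" "b \<le> v" and min: "\<forall>b'\<in>?A. b' \<le> b \<longrightarrow> b = b'"
    using finite_has_minimal2[OF fin \<open>v \<in> ?A\<close>] by blast
  have "b' = b" if "b' \<in> V" "b' \<le> b" for b'
  proof -
    have "b' \<le> v" using order_trans[OF that(2) b(2)] .
    then show ?thesis using min that by auto
  qed
  then show ?thesis using b unfolding minimal_vecs_def by blast
qed

definition hit_vecs :: "('n \<Rightarrow> int) \<Rightarrow> ('n \<Rightarrow> int) set" where
  "hit_vecs w = {v. valid_vec v \<and> hits w v}"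

lemma vecs_of_mideal:
  fixes \<sigma> :: "'k::field \<Rightarrow> 'k" and w :: "'n::finite \<Rightarrow> int"
  assumes "difference_field \<sigma>" "valid_vec w"
  shows "vecs_of (mideal \<sigma> w) = hit_vecs w"
proof -
  have "ymono v \<in> mideal \<sigma> w \<longleftrightarrow> hits w v" if "valid_vec v" for v
    unfolding mideal_eq_hit_polys[OF assms(1)] ymono_eq_sqfree single_mem_hit_polys
    using hit_vec_vars[OF assms(2) that] .
  then show ?thesis unfolding vecs_of_def hit_vecs_def by blast
qed

definition ymono_determined :: "('n::finite, 'k::field) dpoly set \<Rightarrow> bool" where
  "ymono_determined K \<longleftrightarrow> (\<forall>p. p \<in> K \<longleftrightarrow> (\<forall>m\<in>keys p. ymono (top_vec (keys m)) \<in> K))"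

lemma ymono_determined_iff:
  assumes "ymono_determined K"
  shows "p \<in> K \<longleftrightarrow> (\<forall>m\<in>keys p. top_vec (keys m) \<in> vecs_of K)"
proof -
  have "p \<in> K \<longleftrightarrow> (\<forall>m\<in>keys p. ymono (top_vec (keys m)) \<in> K)"
    using assms unfolding ymono_determined_def by blast
  then show ?thesis by (simp add: vecs_of_def valid_top_vec)
qed

lemma ymono_determined_hit_polys: "ymono_determined (hit_polys w)"
  unfolding ymono_determined_def ymono_top_vec single_mem_hit_polys hit_tops
  by (auto simp: hit_polys_def)

lemma ymono_determined_mideal:
  fixes \<sigma> :: "'k::field \<Rightarrow> 'k"
  assumes "difference_field \<sigma>"
  shows "ymono_determined (mideal \<sigma> w :: ('n::finite, 'k) dpoly set)"
  unfolding mideal_eq_hit_polys[OF assms] by (rule ymono_determined_hit_polys)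

lemma ymono_determined_Inter:
  assumes "\<And>K. K \<in> F \<Longrightarrow> ymono_determined K"
  shows "ymono_determined (\<Inter>F)"
proof -
  have "p \<in> K \<longleftrightarrow> (\<forall>m\<in>keys p. ymono (top_vec (keys m)) \<in> K)" if "K \<in> F" for K p
    using assms[OF that] unfolding ymono_determined_def by blast
  then show ?thesis unfolding ymono_determined_def by blast
qed

lemma ymono_determined_monomial_ideal:
  assumes df: "difference_field \<sigma>" and "sigma_ideal \<sigma> I" and rad: "radical I"
    and wm: "well_mixed \<sigma> I" and mon: "monomial_ideal I"
  shows "ymono_determined I"
proof -
  have idI: "is_ideal I" using assms(2) by (simp add: sigma_ideal_def)
  show ?thesis
    unfolding ymono_determined_def
  proof
    fix p
    have "p \<in> I \<longleftrightarrow> (\<forall>m\<in>keys p. single m 1 \<in> I)"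
      by (rule monomial_ideal_iff_keys[OF idI mon])
    also have "\<dots> \<longleftrightarrow> (\<forall>m\<in>keys p. ymono (top_vec (keys m)) \<in> I)"
      using radical_well_mixed_single_mem_iff[OF df wm rad idI] by blast
    finally show "p \<in> I \<longleftrightarrow> (\<forall>m\<in>keys p. ymono (top_vec (keys m)) \<in> I)" .
  qed
qed

lemma sigma_ideal_Inter: "(\<And>K. K \<in> F \<Longrightarrow> sigma_ideal \<sigma> K) \<Longrightarrow> sigma_ideal \<sigma> (\<Inter>F)"
  unfolding sigma_ideal_def is_ideal_def by blast

lemma radical_Inter: "(\<And>K. K \<in> F \<Longrightarrow> radical K) \<Longrightarrow> radical (\<Inter>F)"
  unfolding radical_def by blast

lemma well_mixed_Inter: "(\<And>K. K \<in> F \<Longrightarrow> well_mixed \<sigma> K) \<Longrightarrow> well_mixed \<sigma> (\<Inter>F)"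
  unfolding well_mixed_def by blast

lemma Inter_mideal_radical_well_mixed:
  fixes W :: "('n::finite \<Rightarrow> int) set" and \<sigma> :: "'k::field \<Rightarrow> 'k"
  assumes "difference_field \<sigma>"
  defines "K \<equiv> \<Inter>(mideal \<sigma> ` W)"
  shows "sigma_ideal \<sigma> K" "radical K" "well_mixed \<sigma> K" "ymono_determined K"
  unfolding K_def mideal_eq_hit_polys[OF assms(1)]
  by (auto intro!: sigma_ideal_Inter radical_Inter well_mixed_Inter ymono_determined_Inter
      sigma_ideal_hit_polys radical_hit_polys well_mixed_hit_polys ymono_determined_hit_polys)

text \<open>The paper's defining property of character vectors, for every ideal determined by its
  monomials.\<close>

lemma rwm_gen_minimal_vecs:
  fixes K :: "('n::finite, 'k::field) dpoly set"
  assumes df: "difference_field \<sigma>" and "sigma_ideal \<sigma> K" "radical K" "well_mixed \<sigma> K"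
    and det: "ymono_determined K"
  shows "rwm_gen \<sigma> (ymono ` minimal_vecs (vecs_of K)) = K"
proof
  have "ymono ` minimal_vecs (vecs_of K) \<subseteq> K"
    by (auto simp: minimal_vecs_def vecs_of_def)
  then have "K \<in> {J. sigma_ideal \<sigma> J \<and> radical J \<and> well_mixed \<sigma> J \<and>
      ymono ` minimal_vecs (vecs_of K) \<subseteq> J}"
    using assms(2-4) by blast
  then show "rwm_gen \<sigma> (ymono ` minimal_vecs (vecs_of K)) \<subseteq> K"
    unfolding rwm_gen_def by (rule Inter_lower)
next
  show "K \<subseteq> rwm_gen \<sigma> (ymono ` minimal_vecs (vecs_of K))"
    unfolding rwm_gen_def
  proof (intro Inter_greatest subsetI, clarify)
    fix J :: "('n, 'k) dpoly set" and p
    assume J: "sigma_ideal \<sigma> J" "radical J" "well_mixed \<sigma> J"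
      and gens: "ymono ` minimal_vecs (vecs_of K) \<subseteq> J" and p: "p \<in> K"
    have idJ: "is_ideal J" using J(1) by (simp add: sigma_ideal_def)
    show "p \<in> J"
    proof (rule mem_ideal_if_monomials_mem[OF idJ])
      fix m assume "m \<in> keys p"
      then have "top_vec (keys m) \<in> vecs_of K" using p ymono_determined_iff[OF det] by blast
      then obtain b where b: "b \<in> minimal_vecs (vecs_of K)" "b \<le> top_vec (keys m)"
        using exists_minimal_vec_le[of "vecs_of K"] by (auto simp: vecs_of_def)
      then have "valid_vec b" "ymono b \<in> J" using gens by (auto simp: minimal_vecs_def vecs_of_def)
      then have "ymono (top_vec (keys m)) \<in> J"
        using well_mixed_ymono_mono[OF df idJ J(3) _ valid_top_vec b(2)] by blast
      then show "single m 1 \<in> J"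
        using radical_well_mixed_single_mem_iff[OF df J(3) J(2) idJ] by simp
    qed
  qed
qed

section \<open>Decompositions into the ideals m^w\<close>

definition vec_decomp :: "('n \<Rightarrow> int) set \<Rightarrow> ('n \<Rightarrow> int) set \<Rightarrow> bool" where
  "vec_decomp V W \<longleftrightarrow> V = Collect valid_vec \<inter> \<Inter>(hit_vecs ` W)"

definition irredundant_vec_decomp :: "('n \<Rightarrow> int) set \<Rightarrow> ('n \<Rightarrow> int) set \<Rightarrow> bool" where
  "irredundant_vec_decomp V W \<longleftrightarrow> finite W \<and> W \<subseteq> Collect valid_vec \<and> vec_decomp V W \<and>
     (\<forall>w\<in>W. \<not> vec_decomp V (W - {w}))"

lemma eq_Inter_mideal_iff_vec_decomp:
  fixes K :: "('n::finite, 'k::field) dpoly set" and \<sigma> :: "'k \<Rightarrow> 'k"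
  assumes df: "difference_field \<sigma>" and det: "ymono_determined K"
    and W: "W \<subseteq> Collect valid_vec"
  shows "K = \<Inter>(mideal \<sigma> ` W) \<longleftrightarrow> vec_decomp (vecs_of K) W"
proof
  assume K: "K = \<Inter>(mideal \<sigma> ` W)"
  have "v \<in> hit_vecs w \<longleftrightarrow> valid_vec v \<and> ymono v \<in> mideal \<sigma> w" if "w \<in> W" for v w
    using vecs_of_mideal[OF df, of w] W that unfolding vecs_of_def by blast
  then show "vec_decomp (vecs_of K) W"
    unfolding vec_decomp_def vecs_of_def K by blast
next
  assume dec: "vec_decomp (vecs_of K) W"
  have "p \<in> K \<longleftrightarrow> p \<in> \<Inter>(mideal \<sigma> ` W)" for p
  proof -
    have "p \<in> K \<longleftrightarrow> (\<forall>m\<in>keys p. top_vec (keys m) \<in> vecs_of K)"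
      by (rule ymono_determined_iff[OF det])
    also have "\<dots> \<longleftrightarrow> (\<forall>w\<in>W. \<forall>m\<in>keys p. top_vec (keys m) \<in> hit_vecs w)"
      using dec valid_top_vec unfolding vec_decomp_def by blast
    also have "\<dots> \<longleftrightarrow> (\<forall>w\<in>W. \<forall>m\<in>keys p. top_vec (keys m) \<in> vecs_of (mideal \<sigma> w))"
      using vecs_of_mideal[OF df] W by blast
    also have "\<dots> \<longleftrightarrow> (\<forall>w\<in>W. p \<in> mideal \<sigma> w)"
      using ymono_determined_iff[OF ymono_determined_mideal[OF df]] by blast
    finally show ?thesis by simp
  qed
  then show "K = \<Inter>(mideal \<sigma> ` W)" by blast
qed

lemma irredundant_decomp_iff:
  fixes K :: "('n::finite, 'k::field) dpoly set" and \<sigma> :: "'k \<Rightarrow> 'k"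
  assumes df: "difference_field \<sigma>" and det: "ymono_determined K"
  shows "irredundant_decomp \<sigma> K W \<longleftrightarrow> irredundant_vec_decomp (vecs_of K) W"
proof (cases "W \<subseteq> Collect valid_vec")
  case True
  have "\<Inter>(mideal \<sigma> ` (W - {w})) = K \<longleftrightarrow> vec_decomp (vecs_of K) (W - {w})" for w
    using eq_Inter_mideal_iff_vec_decomp[OF df det, of "W - {w}"] True by auto
  then show ?thesis
    using eq_Inter_mideal_iff_vec_decomp[OF df det True] True
    unfolding irredundant_decomp_def irredundant_vec_decomp_def by auto
next
  case False
  then show ?thesis unfolding irredundant_decomp_def irredundant_vec_decomp_def by auto
qed

lemma hit_vecs_subset_iff:
  assumes u: "valid_vec u" and w: "valid_vec w"
  shows "hit_vecs u \<subseteq> hit_vecs w \<longleftrightarrow> (\<forall>i. u i \<noteq> -1 \<longrightarrow> w i \<noteq> -1 \<and> w i \<le> u i)"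
proof
  assume sub: "hit_vecs u \<subseteq> hit_vecs w"
  show "\<forall>i. u i \<noteq> -1 \<longrightarrow> w i \<noteq> -1 \<and> w i \<le> u i"
  proof (intro allI impI)
    fix i assume ui: "u i \<noteq> -1"
    define v where "v = (\<lambda>_. -1)(i := u i)"
    have "v \<in> hit_vecs u" using u ui by (auto simp: v_def hit_vecs_def hits_def valid_vec_def)
    then obtain j where j: "w j \<noteq> -1" "w j \<le> v j" using sub by (auto simp: hit_vecs_def hits_def)
    have "j = i"
    proof (rule ccontr)
      assume "j \<noteq> i"
      then have "w j \<le> -1" using j(2) by (simp add: v_def)
      then show False using valid_vec_nonneg[OF w j(1)] by simp
    qed
    then show "w i \<noteq> -1 \<and> w i \<le> u i" using j by (simp add: v_def)
  qed
next
  assume "\<forall>i. u i \<noteq> -1 \<longrightarrow> w i \<noteq> -1 \<and> w i \<le> u i"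
  then show "hit_vecs u \<subseteq> hit_vecs w"
    unfolding hit_vecs_def hits_def by (fastforce intro: order_trans)
qed

lemma hit_vecs_inj:
  assumes "valid_vec u" "valid_vec w" "hit_vecs u = hit_vecs w"
  shows "u = w"
proof
  fix i
  have "u i \<noteq> -1 \<longrightarrow> w i \<noteq> -1 \<and> w i \<le> u i" "w i \<noteq> -1 \<longrightarrow> u i \<noteq> -1 \<and> u i \<le> w i"
    using hit_vecs_subset_iff[OF assms(1,2)] hit_vecs_subset_iff[OF assms(2,1)] assms(3) by auto
  then show "u i = w i" by fastforce
qed

text \<open>Up to a bound N on all entries of vectors in U, the complement of \<open>hit_vecs w\<close> has a
  greatest element t; some u \<in> U misses t, and this forces \<open>hit_vecs u \<subseteq> hit_vecs w\<close>.\<close>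

lemma hit_vecs_irreducible:
  fixes w :: "'n::finite \<Rightarrow> int"
  assumes U: "finite U" "U \<subseteq> Collect valid_vec" and w: "valid_vec w"
    and sub: "Collect valid_vec \<inter> \<Inter>(hit_vecs ` U) \<subseteq> hit_vecs w"
  shows "\<exists>u\<in>U. hit_vecs u \<subseteq> hit_vecs w"
proof -
  define N where "N = Max (insert 0 ((\<lambda>(u, i). u i) ` (U \<times> UNIV)))"
  have fin: "finite (insert 0 ((\<lambda>(u, i). u i) ` (U \<times> (UNIV :: 'n set))))"
    using U(1) by simp
  have N: "u i \<le> N" if "u \<in> U" for u i
    unfolding N_def using that by (intro Max_ge[OF fin]) force
  have N0: "0 \<le> N" unfolding N_def by (rule Max_ge[OF fin]) simp
  define t where "t = (\<lambda>i. if w i = -1 then N else w i - 1)"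
  have "valid_vec t"
    unfolding valid_vec_def
  proof
    fix i show "-1 \<le> t i" using N0 valid_vec_nonneg[OF w, of i] by (auto simp: t_def)
  qed
  moreover have "t \<notin> hit_vecs w" by (auto simp: hit_vecs_def hits_def t_def)
  ultimately obtain u where u: "u \<in> U" "\<not> hits u t" using sub by (auto simp: hit_vecs_def)
  have "w i \<noteq> -1 \<and> w i \<le> u i" if "u i \<noteq> -1" for i
  proof -
    have "t i < u i" using u(2) that unfolding hits_def by auto
    then show ?thesis using N[OF u(1), of i] by (auto simp: t_def split: if_splits)
  qed
  then have "hit_vecs u \<subseteq> hit_vecs w"
    using hit_vecs_subset_iff[of u w] U(2) u(1) w by blast
  then show ?thesis using u(1) by blast
qed

lemma vec_decomp_remove:
  assumes "vec_decomp V W" "u \<in> W" "w \<in> W" "u \<noteq> w" "hit_vecs u \<subseteq> hit_vecs w"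
  shows "vec_decomp V (W - {w})"
proof -
  have "\<Inter>(hit_vecs ` (W - {w})) \<subseteq> hit_vecs w" using assms(2,4,5) by blast
  then have "\<Inter>(hit_vecs ` (W - {w})) = \<Inter>(hit_vecs ` W)" using assms(3) by blast
  then show ?thesis using assms(1) by (simp add: vec_decomp_def)
qed

lemma irredundant_vec_decomp_subset:
  fixes W :: "('n::finite \<Rightarrow> int) set"
  assumes W: "irredundant_vec_decomp V W" and W': "irredundant_vec_decomp V W'"
  shows "W \<subseteq> W'"
proof
  have covers: "Collect valid_vec \<inter> \<Inter>(hit_vecs ` X) \<subseteq> hit_vecs x"
    if "irredundant_vec_decomp V X" "irredundant_vec_decomp V Y" "x \<in> Y" for X Y x
    using that unfolding irredundant_vec_decomp_def vec_decomp_def by blast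
  have fin: "finite W" "finite W'" and valid: "W \<subseteq> Collect valid_vec" "W' \<subseteq> Collect valid_vec"
    using W W' unfolding irredundant_vec_decomp_def by blast+
  fix w assume w: "w \<in> W"
  obtain w' where w': "w' \<in> W'" "hit_vecs w' \<subseteq> hit_vecs w"
    using hit_vecs_irreducible[OF fin(2) valid(2) _ covers[OF W' W w]] valid(1) w by blast
  obtain u where u: "u \<in> W" "hit_vecs u \<subseteq> hit_vecs w'"
    using hit_vecs_irreducible[OF fin(1) valid(1) _ covers[OF W W' w'(1)]] valid(2) w'(1) by blast
  have "u = w"
  proof (rule ccontr)
    assume "u \<noteq> w"
    then have "vec_decomp V (W - {w})"
      using vec_decomp_remove[of V W u w] W u w w'(2) unfolding irredundant_vec_decomp_def by blast
    then show False using W w unfolding irredundant_vec_decomp_def by blast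
  qed
  then have "hit_vecs w' = hit_vecs w" using u(2) w'(2) by blast
  then show "w \<in> W'" using hit_vecs_inj[of w' w] valid w w'(1) by blast
qed

lemma irredundant_vec_decomp_if_antichain:
  fixes W :: "('n::finite \<Rightarrow> int) set"
  assumes fin: "finite W" and valid: "W \<subseteq> Collect valid_vec" and dec: "vec_decomp V W"
    and antichain: "\<And>u w. u \<in> W \<Longrightarrow> w \<in> W \<Longrightarrow> hit_vecs u \<subseteq> hit_vecs w \<Longrightarrow> u = w"
  shows "irredundant_vec_decomp V W"
  unfolding irredundant_vec_decomp_def
proof (intro conjI fin valid dec ballI notI)
  fix w assume w: "w \<in> W" and dec': "vec_decomp V (W - {w})"
  have "Collect valid_vec \<inter> \<Inter>(hit_vecs ` (W - {w})) \<subseteq> hit_vecs w"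
    using dec dec' w unfolding vec_decomp_def by blast
  then obtain u where "u \<in> W - {w}" "hit_vecs u \<subseteq> hit_vecs w"
    using hit_vecs_irreducible[of "W - {w}" w] fin valid w by blast
  then show False using antichain w by blast
qed

section \<open>Alexander duality for sets of exponent vectors\<close>

lemma valid_vdiff:
  assumes "valid_vec a" "\<And>i. b i \<le> a i + 1"
  shows "valid_vec (vdiff a b)"
  unfolding valid_vec_def
proof
  fix i show "-1 \<le> vdiff a b i" using assms(2)[of i] by (simp add: vdiff_def)
qed

lemma vdiff_vdiff:
  assumes "\<And>i. b i \<le> a i + 1"
  shows "vdiff a (vdiff a b) = b"
proof
  fix i show "vdiff a (vdiff a b) i = b i" using assms[of i] by (simp add: vdiff_def)
qed

lemma hits_vdiff:
  assumes "\<And>i. b i \<le> a i + 1"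
  shows "hits (vdiff a b) v \<longleftrightarrow> (\<exists>i. b i \<noteq> -1 \<and> a i + 1 - b i \<le> v i)"
proof -
  have "vdiff a b i \<noteq> -1 \<and> vdiff a b i \<le> v i \<longleftrightarrow> b i \<noteq> -1 \<and> a i + 1 - b i \<le> v i" for i
    using assms[of i] by (auto simp: vdiff_def)
  then show ?thesis unfolding hits_def by blast
qed

definition dual_vecs :: "('n \<Rightarrow> int) set \<Rightarrow> ('n \<Rightarrow> int) \<Rightarrow> ('n \<Rightarrow> int) set" where
  "dual_vecs V a = Collect valid_vec \<inter> (\<Inter>b\<in>minimal_vecs V. hit_vecs (vdiff a b))"

locale alexander_duality =
  fixes V :: "('n::finite \<Rightarrow> int) set" and a :: "'n \<Rightarrow> int"
  assumes valid_V: "V \<subseteq> Collect valid_vec"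
    and up_closed: "\<And>v w. v \<in> V \<Longrightarrow> valid_vec w \<Longrightarrow> v \<le> w \<Longrightarrow> w \<in> V"
    and valid_a: "valid_vec a"
    and minimal_le: "\<And>b. b \<in> minimal_vecs V \<Longrightarrow> b \<le> a"
begin

lemma minimal_le_plus_one: "b \<in> minimal_vecs V \<Longrightarrow> b i \<le> a i + 1"
  using minimal_le[of b] by (auto simp: le_fun_def intro: add_increasing2)

lemma minimal_nonneg: "b \<in> minimal_vecs V \<Longrightarrow> b i \<noteq> -1 \<Longrightarrow> 0 \<le> b i"
  using valid_V valid_vec_nonneg[of b i] by (auto simp: minimal_vecs_def)

lemma dual_valid: "dual_vecs V a \<subseteq> Collect valid_vec"
  by (simp add: dual_vecs_def)

lemma minimal_dual_le:
  assumes c: "c \<in> minimal_vecs (dual_vecs V a)"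
  shows "c i \<le> a i + 1"
proof (rule ccontr)
  assume gt: "\<not> c i \<le> a i + 1"
  define c' where "c' = c(i := a i + 1)"
  have "valid_vec c"
    using c dual_valid by (auto simp: minimal_vecs_def)
  then have "valid_vec c'"
    using valid_a unfolding valid_vec_def c'_def by (simp add: add_increasing2)
  moreover have "hits (vdiff a b) c'" if b: "b \<in> minimal_vecs V" for b
  proof -
    have "hits (vdiff a b) c"
      using c b by (auto simp: minimal_vecs_def dual_vecs_def hit_vecs_def)
    then obtain j where j: "b j \<noteq> -1" "a j + 1 - b j \<le> c j"
      using hits_vdiff[of b a, OF minimal_le_plus_one[OF b]] by blast
    moreover have "a j + 1 - b j \<le> c' j"
      using j minimal_nonneg[OF b j(1)] by (auto simp: c'_def)
    ultimately show ?thesis using hits_vdiff[of b a, OF minimal_le_plus_one[OF b]] by blast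
  qed
  ultimately have "c' \<in> dual_vecs V a" by (auto simp: dual_vecs_def hit_vecs_def)
  moreover have "c' \<le> c" using gt by (auto simp: c'_def le_fun_def)
  moreover have "c' i \<noteq> c i" using gt by (simp add: c'_def)
  then have "c' \<noteq> c" by metis
  ultimately show False using c unfolding minimal_vecs_def by blast
qed

lemma hits_vdiff_minimal_dual:
  assumes v: "v \<in> V" and c: "c \<in> minimal_vecs (dual_vecs V a)"
  shows "hits (vdiff a c) v"
proof -
  obtain b where b: "b \<in> minimal_vecs V" "b \<le> v" using exists_minimal_vec_le[OF valid_V v] by blast
  have "hits (vdiff a b) c"
    using c b(1) by (auto simp: minimal_vecs_def dual_vecs_def hit_vecs_def)
  then obtain i where i: "b i \<noteq> -1" "a i + 1 - b i \<le> c i"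
    using hits_vdiff[of b a, OF minimal_le_plus_one[OF b(1)]] by blast
  have "b i \<le> a i" "b i \<le> v i" using minimal_le[OF b(1)] b(2) by (simp_all add: le_fun_def)
  then have "c i \<noteq> -1" "a i + 1 - c i \<le> v i" using i by linarith+
  then show ?thesis using hits_vdiff[of c a, OF minimal_dual_le[OF c]] by blast
qed

text \<open>If v is not in V, its reflection c0 = a - v lies in the dual, and a minimal c \<le> c0 of the
  dual yields a set \<open>hit_vecs (vdiff a c)\<close> that misses v.\<close>

lemma mem_if_hits_vdiff_minimal_dual:
  assumes valid_v: "valid_vec v" and hits: "\<And>c. c \<in> minimal_vecs (dual_vecs V a) \<Longrightarrow> hits (vdiff a c) v"
  shows "v \<in> V"
proof (rule ccontr)
  assume "v \<notin> V"
  define c0 where "c0 = (\<lambda>i. if a i + 1 \<le> v i then -1 else a i - v i)"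
  have "hits (vdiff a b) c0" if b: "b \<in> minimal_vecs V" for b
  proof -
    have "\<not> b \<le> v" using up_closed[of b v] b valid_V valid_v \<open>v \<notin> V\<close>
      by (auto simp: minimal_vecs_def)
    then obtain i where "v i < b i" by (auto simp: le_fun_def not_le)
    moreover have "b i \<le> a i" using minimal_le[OF b] by (simp add: le_fun_def)
    moreover have "-1 \<le> v i" using valid_v by (simp add: valid_vec_def)
    ultimately have "b i \<noteq> -1" "a i + 1 - b i \<le> c0 i" by (auto simp: c0_def)
    then show ?thesis using hits_vdiff[of b a, OF minimal_le_plus_one[OF b]] by blast
  qed
  moreover have "valid_vec c0" using valid_v by (auto simp: valid_vec_def c0_def)
  ultimately have "c0 \<in> dual_vecs V a" by (auto simp: dual_vecs_def hit_vecs_def)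
  then obtain c where c: "c \<in> minimal_vecs (dual_vecs V a)" "c \<le> c0"
    using exists_minimal_vec_le[OF dual_valid] by blast
  then obtain i where i: "c i \<noteq> -1" "a i + 1 - c i \<le> v i"
    using hits[OF c(1)] hits_vdiff[of c a, OF minimal_dual_le[OF c(1)]] by blast
  have "0 \<le> c i" using c(1) dual_valid valid_vec_nonneg[of c i] i(1)
    by (auto simp: minimal_vecs_def)
  moreover have "c i \<le> c0 i" using c(2) by (simp add: le_fun_def)
  ultimately show False using i(2) by (auto simp: c0_def split: if_splits)
qed

lemma vec_decomp_dual: "vec_decomp V (vdiff a ` minimal_vecs (dual_vecs V a))"
  unfolding vec_decomp_def
proof (intro set_eqI iffI)
  fix v assume "v \<in> V"
  then show "v \<in> Collect valid_vec \<inter> \<Inter>(hit_vecs ` vdiff a ` minimal_vecs (dual_vecs V a))"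
    using hits_vdiff_minimal_dual valid_V by (auto simp: hit_vecs_def)
next
  fix v assume "v \<in> Collect valid_vec \<inter> \<Inter>(hit_vecs ` vdiff a ` minimal_vecs (dual_vecs V a))"
  then show "v \<in> V"
    by (intro mem_if_hits_vdiff_minimal_dual) (auto simp: hit_vecs_def)
qed

lemma vdiff_minimal_dual_antichain:
  assumes c: "c \<in> minimal_vecs (dual_vecs V a)" and c': "c' \<in> minimal_vecs (dual_vecs V a)"
    and sub: "hit_vecs (vdiff a c) \<subseteq> hit_vecs (vdiff a c')"
  shows "c = c'"
proof -
  have valid: "valid_vec c" "valid_vec c'"
    using c c' dual_valid by (auto simp: minimal_vecs_def)
  have sub_i: "\<forall>i. vdiff a c i \<noteq> -1 \<longrightarrow> vdiff a c' i \<noteq> -1 \<and> vdiff a c' i \<le> vdiff a c i"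
    using sub hit_vecs_subset_iff[OF valid_vdiff[of a c, OF valid_a minimal_dual_le[OF c]]
        valid_vdiff[of a c', OF valid_a minimal_dual_le[OF c']]] by blast
  have "c i \<le> c' i" for i
  proof (cases "c i = -1")
    case True
    then show ?thesis using valid(2) by (simp add: valid_vec_def)
  next
    case False
    then have "vdiff a c i \<noteq> -1" using minimal_dual_le[OF c, of i] by (simp add: vdiff_def)
    then have "vdiff a c' i \<noteq> -1" "vdiff a c' i \<le> vdiff a c i" using sub_i by blast+
    then show ?thesis using False by (simp add: vdiff_def split: if_splits)
  qed
  then have "c \<le> c'" by (simp add: le_fun_def)
  then show ?thesis using c c' unfolding minimal_vecs_def by blast
qed

lemma vdiff_minimal_dual_valid: "vdiff a ` minimal_vecs (dual_vecs V a) \<subseteq> Collect valid_vec"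
proof
  fix u assume "u \<in> vdiff a ` minimal_vecs (dual_vecs V a)"
  then obtain c where c: "c \<in> minimal_vecs (dual_vecs V a)" "u = vdiff a c" by blast
  then show "u \<in> Collect valid_vec"
    using valid_vdiff[of a c, OF valid_a minimal_dual_le[OF c(1)]] by simp
qed

lemma irredundant_vec_decomp_dual: "irredundant_vec_decomp V (vdiff a ` minimal_vecs (dual_vecs V a))"
proof (rule irredundant_vec_decomp_if_antichain[OF _ vdiff_minimal_dual_valid vec_decomp_dual])
  have "minimal_vecs (dual_vecs V a) \<subseteq> {c. valid_vec c \<and> c \<le> (\<lambda>i. a i + 1)}"
    using dual_valid minimal_dual_le by (auto simp: minimal_vecs_def le_fun_def)
  then show "finite (vdiff a ` minimal_vecs (dual_vecs V a))"
    by (intro finite_imageI finite_subset[OF _ finite_valid_le])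
  show "u = w" if "u \<in> vdiff a ` minimal_vecs (dual_vecs V a)"
    "w \<in> vdiff a ` minimal_vecs (dual_vecs V a)" "hit_vecs u \<subseteq> hit_vecs w" for u w
    using that vdiff_minimal_dual_antichain by blast
qed

lemma irredundant_vec_decomp_iff:
  "irredundant_vec_decomp V W \<longleftrightarrow> W = vdiff a ` minimal_vecs (dual_vecs V a)"
proof
  assume "irredundant_vec_decomp V W"
  then show "W = vdiff a ` minimal_vecs (dual_vecs V a)"
    using irredundant_vec_decomp_subset irredundant_vec_decomp_dual by (metis subset_antisym)
qed (simp add: irredundant_vec_decomp_dual)

lemma image_vdiff_minimal_dual:
  "(\<lambda>b. f (vdiff a b)) ` vdiff a ` minimal_vecs (dual_vecs V a) = f ` minimal_vecs (dual_vecs V a)"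
proof -
  have "vdiff a (vdiff a c) = c" if "c \<in> minimal_vecs (dual_vecs V a)" for c
    using that by (intro vdiff_vdiff minimal_dual_le)
  then show ?thesis by (simp add: image_image cong: image_cong)
qed

end

lemma alexander_duality_vecs_of:
  fixes I :: "('n::finite, 'k::field) dpoly set"
  assumes df: "difference_field \<sigma>" and "sigma_ideal \<sigma> I" and wm: "well_mixed \<sigma> I"
    and "valid_vec a" and "\<forall>b. character_vector I b \<longrightarrow> b \<le> a"
  shows "alexander_duality (vecs_of I) a"
proof
  have idI: "is_ideal I" using assms(2) by (simp add: sigma_ideal_def)
  show "w \<in> vecs_of I" if "v \<in> vecs_of I" "valid_vec w" "v \<le> w" for v w
    using well_mixed_ymono_mono[OF df idI wm] that by (auto simp: vecs_of_def)
qed (use assms(4,5) in \<open>auto simp: vecs_of_def character_vector_iff\<close>)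

lemma alexander_dual_eq_Inter:
  "alexander_dual \<sigma> I a = \<Inter>(mideal \<sigma> ` {vdiff a b | b. character_vector I b})"
  unfolding alexander_dual_def by (rule arg_cong[where f = Inter]) blast

lemma alexander_dual_radical_well_mixed:
  fixes I :: "('n::finite, 'k::field) dpoly set"
  assumes "difference_field \<sigma>"
  shows "sigma_ideal \<sigma> (alexander_dual \<sigma> I a)" "radical (alexander_dual \<sigma> I a)"
    "well_mixed \<sigma> (alexander_dual \<sigma> I a)" "ymono_determined (alexander_dual \<sigma> I a)"
  unfolding alexander_dual_eq_Inter by (rule Inter_mideal_radical_well_mixed[OF assms])+

lemma vecs_of_alexander_dual:
  fixes I :: "('n::finite, 'k::field) dpoly set" and \<sigma> :: "'k \<Rightarrow> 'k"
  assumes df: "difference_field \<sigma>" and a: "valid_vec a"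
    and le: "\<forall>b. character_vector I b \<longrightarrow> b \<le> a"
  shows "vecs_of (alexander_dual \<sigma> I a) = dual_vecs (vecs_of I) a"
proof (rule set_eqI)
  fix v
  have hit: "ymono v \<in> mideal \<sigma> (vdiff a b) \<longleftrightarrow> v \<in> hit_vecs (vdiff a b)"
    if "valid_vec v" "character_vector I b" for b
  proof -
    have "b \<le> a" using le that(2) by blast
    then have "b i \<le> a i + 1" for i by (simp add: le_fun_def add_increasing2)
    then have "valid_vec (vdiff a b)" by (rule valid_vdiff[OF a])
    then show ?thesis using vecs_of_mideal[OF df] that(1) unfolding vecs_of_def by blast
  qed
  have "v \<in> vecs_of (alexander_dual \<sigma> I a) \<longleftrightarrow>
      valid_vec v \<and> (\<forall>b. character_vector I b \<longrightarrow> ymono v \<in> mideal \<sigma> (vdiff a b))"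
    unfolding vecs_of_def alexander_dual_def by blast
  also have "\<dots> \<longleftrightarrow> v \<in> dual_vecs (vecs_of I) a"
    using hit by (auto simp: dual_vecs_def character_vector_iff)
  finally show "v \<in> vecs_of (alexander_dual \<sigma> I a) \<longleftrightarrow> v \<in> dual_vecs (vecs_of I) a" .
qed

theorem theorem7p4:
  fixes \<sigma> :: "'k::field_char_0 \<Rightarrow> 'k"
    and I :: "('n::finite, 'k) dpoly set"
    and a :: "'n \<Rightarrow> int"
  assumes "difference_field \<sigma>"
    and "sigma_ideal \<sigma> I" and "radical I" and "well_mixed \<sigma> I" and "monomial_ideal I"
    and "valid_vec a"
    and "\<forall>b. character_vector I b \<longrightarrow> b \<le> a"
  shows "I = \<Inter>{mideal \<sigma> (vdiff a b) | b. character_vector (alexander_dual \<sigma> I a) b} \<and>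
         alexander_dual \<sigma> I a =
           rwm_gen \<sigma> {ymono (vdiff a b) | b. irreducible_component \<sigma> I b}"
proof -
  let ?D = "alexander_dual \<sigma> I a" and ?M = "minimal_vecs (dual_vecs (vecs_of I) a)"
  interpret alexander_duality "vecs_of I" a
    by (rule alexander_duality_vecs_of[OF assms(1,2,4,6,7)])
  have detI: "ymono_determined I" by (rule ymono_determined_monomial_ideal[OF assms(1-5)])
  have vecsD: "vecs_of ?D = dual_vecs (vecs_of I) a"
    by (rule vecs_of_alexander_dual[OF assms(1,6,7)])
  have components: "irreducible_component \<sigma> I b \<longleftrightarrow> b \<in> vdiff a ` ?M" for b
    by (simp add: irreducible_component_def irredundant_decomp_iff[OF assms(1) detI]
        irredundant_vec_decomp_iff)
  have I: "I = \<Inter>(mideal \<sigma> ` vdiff a ` ?M)"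
    using eq_Inter_mideal_iff_vec_decomp[OF assms(1) detI vdiff_minimal_dual_valid] vec_decomp_dual
    by (rule iffD2)
  have D: "?D = rwm_gen \<sigma> (ymono ` ?M)"
    using rwm_gen_minimal_vecs[OF assms(1) alexander_dual_radical_well_mixed[OF assms(1), of I a]]
    unfolding vecsD by simp
  have mideals: "{mideal \<sigma> (vdiff a b) | b. character_vector ?D b} = mideal \<sigma> ` vdiff a ` ?M"
    by (auto simp: character_vector_iff vecsD)
  have generators: "{ymono (vdiff a b) | b. irreducible_component \<sigma> I b} = ymono ` ?M"
    unfolding components image_vdiff_minimal_dual[of ymono, symmetric] by blast
  show ?thesis unfolding mideals generators using I D by (rule conjI)
qed

end
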